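(* Let $q$ be an odd prime power and use the setting of the context. Then $\mathcal C=\pi^G$ is a $(6,(q^3-1)(q^2+q+1),4;3)_q$ constant-dimension subspace code; that is, $\mathcal C$ consists of exactly $(q^3-1)(q^2+q+1)$ planes of $\Sigma\cong{\rm PG}(5,q)$ and any two distinct planes of $\mathcal C$ meet in at most one point.
   Context: Let $\Sigma$ be the set of points $\langle(a,b,a^q,b^q,a^{q^2},b^{q^2})\rangle$ of ${\rm PG}(5,q^3)$, $a,b\in{\rm GF}(q^3)$, $(a,b)\ne(0,0)$; since these vectors form a $6$-dimensional ${\rm GF}(q)$-vector space, $\Sigma$ is a model of ${\rm PG}(5,q)$ whose planes correspond to its $3$-dimensional ${\rm GF}(q)$-subspaces. Points are column vectors. For $\eta\in{\rm GF}(q^3)\setminus\{0\}$ let $g_\eta$ be the projectivity with matrix ${\rm diag}(\eta^2,\eta^{q+1},\eta^{2q},\eta^{q^2+q},\eta^{2q^2},\eta^{q^2+1})$, and for $w\in{\rm GF}(q^3)\setminus\{0\}$ let $h_w$ be the projectivity with matrix ${\rm diag}(1,w,1,w^q,1,w^{q^2})$. Let $S=\{g_\eta\}$ (order $q^2+q+1$), $W=\{h_w\}$ (order $q^3-1$), and $G=S\times W$, of order $(q^3-1)(q^2+q+1)$. Let $\pi$ be the plane of $\Sigma$ consisting of the points $\langle(a,\frac{a+a^q}{2},a^q,\frac{a^q+a^{q^2}}{2},a^{q^2},\frac{a^{q^2}+a}{2})\rangle$, $a\in{\rm GF}(q^3)\setminus\{0\}$, and $\mathcal C=\pi^G=\{\pi^g:g\in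 G\}$. An $(n,M,4;3)_q$ constant-dimension code is a set of $M$ planes of ${\rm PG}(n-1,q)$ pairwise meeting in at most a point. *)

theory Defs
  imports "HOL-Computational_Algebra.Primes"
begin

text \<open>Vectors of GF(q^3)^6 are represented as functions nat => 'a, with
  coordinates 0..5 (all other coordinates are 0). A point of PG(5,q^3) is
  represented by the set of nonzero scalar multiples of a nonzero vector.\<close>

type_synonym 'a vec6 = "nat \<Rightarrow> 'a"
type_synonym 'a point = "'a vec6 set"

definition vec6 :: "'a::zero \<Rightarrow> 'a \<Rightarrow> 'a \<Rightarrow> 'a \<Rightarrow> 'a \<Rightarrow> 'a \<Rightarrow> 'a vec6" where
  "vec6 x0 x1 x2 x3 x4 x5 = (\<lambda>i. if i = 0 then x0 else if i = 1 then x1 else if i = 2 then x2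
      else if i = 3 then x3 else if i = 4 then x4 else if i = 5 then x5 else 0)"

definition proj :: "'a::field vec6 \<Rightarrow> 'a point" where
  "proj v = {(\<lambda>i. c * v i) | c. c \<noteq> 0}"

definition subfield :: "nat \<Rightarrow> 'a::field set" where
  "subfield q = {x. x ^ q = x}"

definition sigvec :: "nat \<Rightarrow> 'a::field \<Rightarrow> 'a \<Rightarrow> 'a vec6" where
  "sigvec q a b = vec6 a b (a ^ q) (b ^ q) (a ^ (q^2)) (b ^ (q^2))"

text \<open>Planes of Sigma: point sets coming from 3-dimensional GF(q)-subspaces of the
  GF(q)-space {(a,b)}; such a subspace is given by a GF(q)-basis u1,u2,u3.\<close>
definition sigma_plane :: "nat \<Rightarrow> 'a::field point set \<Rightarrow> bool" where
  "sigma_plane q P \<longleftrightarrow> (\<exists>a1 b1 a2 b2 a3 b3 :: 'a.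
     (\<forall>x1\<in>subfield q. \<forall>x2\<in>subfield q. \<forall>x3\<in>subfield q.
        x1 * a1 + x2 * a2 + x3 * a3 = 0 \<and> x1 * b1 + x2 * b2 + x3 * b3 = 0
        \<longrightarrow> x1 = 0 \<and> x2 = 0 \<and> x3 = 0) \<and>
     P = {proj (sigvec q (x1 * a1 + x2 * a2 + x3 * a3) (x1 * b1 + x2 * b2 + x3 * b3)) | x1 x2 x3.
            x1 \<in> subfield q \<and> x2 \<in> subfield q \<and> x3 \<in> subfield q \<and>
            (x1 * a1 + x2 * a2 + x3 * a3, x1 * b1 + x2 * b2 + x3 * b3) \<noteq> (0, 0)})"

text \<open>Diagonal matrices, given by their diagonal entries, acting on points.\<close>
definition diag_g :: "nat \<Rightarrow> 'a::field \<Rightarrow> 'a vec6" where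
  "diag_g q \<eta> = vec6 (\<eta>^2) (\<eta>^(q+1)) (\<eta>^(2*q)) (\<eta>^(q^2+q)) (\<eta>^(2*q^2)) (\<eta>^(q^2+1))"

definition diag_h :: "nat \<Rightarrow> 'a::field \<Rightarrow> 'a vec6" where
  "diag_h q w = vec6 1 w 1 (w ^ q) 1 (w ^ (q^2))"

definition diag_act :: "'a::field vec6 \<Rightarrow> 'a point \<Rightarrow> 'a point" where
  "diag_act d P = (\<lambda>v. (\<lambda>i. d i * v i)) ` P"

definition groupG :: "nat \<Rightarrow> 'a::field vec6 set" where
  "groupG q = {(\<lambda>i. diag_g q \<eta> i * diag_h q w i) | \<eta> w. \<eta> \<noteq> 0 \<and> w \<noteq> 0}"

definition plane_pi :: "nat \<Rightarrow> 'a::field point set" where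
  "plane_pi q = {proj (vec6 a ((a + a^q) / 2) (a^q) ((a^q + a^(q^2)) / 2) (a^(q^2)) ((a^(q^2) + a) / 2))
                 | a. a \<noteq> 0}"

definition codeC :: "nat \<Rightarrow> 'a::field point set set" where
  "codeC q = {diag_act d ` plane_pi q | d. d \<in> groupG q}"

end

theory Submission
  imports Defs "HOL-Library.Cardinality" "HOL-Number_Theory.Residues" "HOL-Computational_Algebra.Polynomial"
begin

(*
  The element g_eta h_w maps the vector (a, b, a^q, b^q, a^(q^2), b^(q^2)) to the vector of the
  same shape built from eta^2 a and eta^(q+1) w b.  As pi is the graph of a |-> (a + a^q)/2, every
  plane of the orbit is the graph of the GF(q)-linear map a |-> w (lambda a + a^q / lambda) / 2
  with lambda = eta^(q-1), and the graph of a GF(q)-linear map of GF(q^3) is a plane of Sigma.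
  Two such graphs meet in the points with alpha a + beta a^q = 0, alpha and beta being differences
  of coefficients; unless alpha = beta = 0, two solutions differ by a factor in GF(q), so distinct
  planes share at most one point.  Equal planes force alpha = beta = 0, hence lambda^2 = mu^2,
  and then lambda = mu because both are (q^2+q+1)-th roots of unity and q^2+q+1 is odd.  So the
  plane determines (lambda, w), which ranges over q^2+q+1 values of lambda and q^3-1 values of w.
*)

section \<open>Powers in finite fields\<close>

lemma card_roots_power_le:
  fixes c :: "'a::idom"
  assumes "n > 0"
  shows "card {x. x ^ n = c} \<le> n"
proof -
  define p where "p = monom 1 n - [:c:]"
  have "coeff p n = 1"
    using assms by (cases n) (simp_all add: p_def coeff_monom)
  then have "p \<noteq> 0"
    by auto
  moreover have "degree p \<le> n"
    unfolding p_def by (metis degree_diff_le degree_monom_le degree_pCons_0 le0)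
  moreover have "{x. x ^ n = c} = {x. poly p x = 0}"
    by (simp add: p_def poly_monom)
  ultimately show ?thesis
    using card_poly_roots_bound[of p] by simp
qed

lemma two_le_card_field: "2 \<le> CARD('a::{field,finite})"
proof -
  have "card {0, 1::'a} \<le> CARD('a)"
    by (rule card_mono) simp_all
  then show ?thesis
    by simp
qed

lemma card_nonzero: "card {x::'a::{field,finite}. x \<noteq> 0} = CARD('a) - 1"
  by (simp add: Collect_neg_eq Compl_eq_Diff_UNIV card_Diff_singleton)

lemma power_card_minus_one_eq_one:
  fixes x :: "'a::{field,finite}"
  assumes "x \<noteq> 0"
  shows "x ^ (CARD('a) - 1) = 1"
proof -
  let ?U = "UNIV - {0::'a}"
  have "bij_betw ((*) x) ?U ?U"
    using assms by (intro bij_betwI[where g = "\<lambda>y. y / x"]) auto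
  then have "(\<Prod>y\<in>?U. x * y) = (\<Prod>y\<in>?U. y)"
    by (rule prod.reindex_bij_betw)
  moreover have "(\<Prod>y\<in>?U. x * y) = x ^ card ?U * (\<Prod>y\<in>?U. y)"
    by (simp add: prod.distrib)
  moreover have "(\<Prod>y\<in>?U. y) \<noteq> 0" and "card ?U = CARD('a) - 1"
    by (simp_all add: card_Diff_singleton)
  ultimately show ?thesis
    by simp
qed

lemma sum_card_power_fibres:
  fixes m :: nat
  assumes "m > 0"
  shows "(\<Sum>y \<in> (\<lambda>x::'a::{field,finite}. x ^ m) ` {x. x \<noteq> 0}. card {x. x ^ m = y})
           = CARD('a) - 1"
proof -
  let ?P = "(\<lambda>x::'a. x ^ m) ` {x. x \<noteq> 0}"
  have "{x::'a. x \<noteq> 0} = (\<Union>y\<in>?P. {x. x ^ m = y})"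
    using assms by (auto simp: power_0_left)
  moreover have "card (\<Union>y\<in>?P. {x. x ^ m = y}) = (\<Sum>y\<in>?P. card {x. x ^ m = y})"
    by (rule card_UN_disjoint) auto
  ultimately show ?thesis
    using card_nonzero[where 'a = 'a] by simp
qed

lemma card_image_power_nonzero:
  assumes "CARD('a::{field,finite}) - 1 = m * n"
  shows "card ((\<lambda>x::'a. x ^ m) ` {x. x \<noteq> 0}) = n"
proof -
  let ?P = "(\<lambda>x::'a. x ^ m) ` {x. x \<noteq> 0}"
  have "m > 0" "n > 0"
    using assms two_le_card_field[where 'a = 'a] by (auto intro!: gr0I)
  have "?P \<subseteq> {y. y ^ n = 1}"
    using assms power_card_minus_one_eq_one[where 'a = 'a] by (auto simp flip: power_mult)
  then have "card ?P \<le> card {y::'a. y ^ n = 1}"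
    by (intro card_mono) simp_all
  also have "\<dots> \<le> n"
    using \<open>n > 0\<close> by (rule card_roots_power_le)
  finally have "card ?P \<le> n" .
  have "m * n = (\<Sum>y\<in>?P. card {x. x ^ m = y})"
    using sum_card_power_fibres[OF \<open>m > 0\<close>, where 'a = 'a] assms by simp
  also have "\<dots> \<le> card ?P * m"
    using sum_bounded_above[of ?P "\<lambda>y. card {x. x ^ m = y}" m, unfolded of_nat_id]
      card_roots_power_le[OF \<open>m > 0\<close>] by blast
  finally have "m * n \<le> card ?P * m" .
  with \<open>card ?P \<le> n\<close> show ?thesis
    using \<open>m > 0\<close> by (simp add: mult.commute)
qed

lemma card_power_eq_one:
  assumes "CARD('a::{field,finite}) - 1 = m * n"
  shows "card {x::'a. x ^ m = 1} = m"
proof (rule ccontr)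
  let ?P = "(\<lambda>x::'a. x ^ m) ` {x. x \<noteq> 0}"
  have "m > 0"
    using assms two_le_card_field[where 'a = 'a] by (auto intro!: gr0I)
  assume "card {x::'a. x ^ m = 1} \<noteq> m"
  then have "card {x::'a. x ^ m = 1} < m"
    using card_roots_power_le[OF \<open>m > 0\<close>] le_neq_implies_less by blast
  moreover have "1 \<in> ?P"
    by (rule image_eqI[of _ _ 1]) simp_all
  ultimately have "(\<Sum>y\<in>?P. card {x. x ^ m = y}) < (\<Sum>y\<in>?P. m)"
    using card_roots_power_le[OF \<open>m > 0\<close>] by (intro sum_strict_mono_ex1) auto
  also have "\<dots> = m * n"
    using card_image_power_nonzero[OF assms] by simp
  finally show False
    using sum_card_power_fibres[OF \<open>m > 0\<close>, where 'a = 'a] assms by simp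
qed

lemma prime_CHAR_finite_field: "prime CHAR('a::{field,finite})"
  by (intro prime_CHAR_semidom finite_imp_CHAR_pos) simp

lemma CHAR_eq_if_card_prime_power:
  assumes "prime p" and "CARD('a::{field,finite}) = p ^ j"
  shows "CHAR('a) = p"
proof -
  have "CHAR('a) dvd p ^ j"
    using CHAR_dvd_CARD[where 'a = 'a] assms(2) by simp
  then show ?thesis
    using prime_CHAR_finite_field[where 'a = 'a] assms(1) prime_dvd_power primes_dvd_imp_eq
    by blast
qed

lemma subfield_divide: "x \<in> subfield q \<Longrightarrow> y \<in> subfield q \<Longrightarrow> x / y \<in> subfield q"
  by (simp add: subfield_def power_divide)

lemma independent_one_of_not_in_span:
  fixes K :: "'a::field set"
  assumes neg_divide_closed: "\<And>x y. x \<in> K \<Longrightarrow> y \<in> K \<Longrightarrow> - x / y \<in> K"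
    and a2: "a2 \<notin> K" and a3: "a3 \<notin> (\<lambda>(x, y). x + y * a2) ` (K \<times> K)"
    and "x \<in> K" "y \<in> K" "z \<in> K" and zero: "x + y * a2 + z * a3 = 0"
  shows "x = 0 \<and> y = 0 \<and> z = 0"
proof -
  have "z = 0"
  proof (rule ccontr)
    assume "z \<noteq> 0"
    have "z * a3 = - (x + y * a2)"
      using zero by (simp add: add_eq_0_iff)
    then have "a3 = - x / z + (- y / z) * a2"
      using \<open>z \<noteq> 0\<close> by (simp add: field_simps)
    moreover have "(- x / z, - y / z) \<in> K \<times> K"
      using \<open>x \<in> K\<close> \<open>y \<in> K\<close> \<open>z \<in> K\<close> neg_divide_closed by simp
    ultimately show False
      using a3 by (auto intro!: image_eqI[of _ _ "(- x / z, - y / z)"])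
  qed
  moreover have "y = 0"
  proof (rule ccontr)
    assume "y \<noteq> 0"
    then have "a2 = - x / y"
      using zero \<open>z = 0\<close> by (simp add: field_simps add_eq_0_iff)
    then show False
      using a2 \<open>x \<in> K\<close> \<open>y \<in> K\<close> neg_divide_closed by simp
  qed
  ultimately show ?thesis
    using zero by simp
qed

lemma inj_on_combination3:
  fixes K :: "'a::ring set"
  assumes diff_closed: "\<And>x y. x \<in> K \<Longrightarrow> y \<in> K \<Longrightarrow> x - y \<in> K"
    and independent: "\<And>x1 x2 x3. x1 \<in> K \<Longrightarrow> x2 \<in> K \<Longrightarrow> x3 \<in> K \<Longrightarrow>
      x1 * a1 + x2 * a2 + x3 * a3 = 0 \<Longrightarrow> x1 = 0 \<and> x2 = 0 \<and> x3 = 0"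
  shows "inj_on (\<lambda>(x1, x2, x3). x1 * a1 + x2 * a2 + x3 * a3) (K \<times> K \<times> K)"
proof (rule inj_onI, clarsimp)
  fix x y z x' y' z'
  assume "x \<in> K" "y \<in> K" "z \<in> K" "x' \<in> K" "y' \<in> K" "z' \<in> K"
    and "x * a1 + y * a2 + z * a3 = x' * a1 + y' * a2 + z' * a3"
  then have "(x - x') * a1 + (y - y') * a2 + (z - z') * a3 = 0"
    by (simp add: algebra_simps)
  moreover have "x - x' \<in> K" "y - y' \<in> K" "z - z' \<in> K"
    using diff_closed \<open>x \<in> K\<close> \<open>y \<in> K\<close> \<open>z \<in> K\<close> \<open>x' \<in> K\<close> \<open>y' \<in> K\<close> \<open>z' \<in> K\<close>
    by simp_all
  ultimately have "x - x' = 0 \<and> y - y' = 0 \<and> z - z' = 0"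
    using independent by blast
  then show "x = x' \<and> y = y' \<and> z = z'"
    by simp
qed

lemma basis_of_card_cube:
  fixes K :: "'a::{field,finite} set"
  assumes diff_closed: "\<And>x y. x \<in> K \<Longrightarrow> y \<in> K \<Longrightarrow> x - y \<in> K"
    and divide_closed: "\<And>x y. x \<in> K \<Longrightarrow> y \<in> K \<Longrightarrow> x / y \<in> K"
    and card_cube: "CARD('a) = card K ^ 3"
  obtains a1 a2 a3 where
    "bij_betw (\<lambda>(x1, x2, x3). x1 * a1 + x2 * a2 + x3 * a3) (K \<times> K \<times> K) UNIV"
proof -
  let ?k = "card K"
  have "?k \<ge> 2"
  proof (rule ccontr)
    assume "\<not> ?k \<ge> 2"
    then have "?k ^ 3 \<le> 1 ^ 3"
      by (intro power_mono) simp_all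
    then show False
      using card_cube two_le_card_field[where 'a = 'a] by simp
  qed
  then obtain x0 where "x0 \<in> K"
    by (metis card.empty ex_in_conv not_numeral_le_zero)
  then have "0 \<in> K"
    using diff_closed[of x0 x0] by simp
  then have neg_divide_closed: "- x / y \<in> K" if "x \<in> K" "y \<in> K" for x y
    using that diff_closed divide_closed by (metis diff_0)
  have "?k ^ 1 < ?k ^ 3" and "?k ^ 2 < ?k ^ 3"
    using \<open>?k \<ge> 2\<close> by (intro power_strict_increasing; simp)+
  then have "?k < CARD('a)" and "?k * ?k < CARD('a)"
    using card_cube by (simp_all add: power2_eq_square)
  then have "K \<noteq> UNIV"
    by auto
  then obtain a2 where a2: "a2 \<notin> K"
    by blast
  let ?S = "(\<lambda>(x, y). x + y * a2) ` (K \<times> K)"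
  have "card ?S \<le> ?k * ?k"
    using card_image_le[of "K \<times> K"] by (simp add: card_cartesian_product)
  then have "?S \<noteq> UNIV"
    using \<open>?k * ?k < CARD('a)\<close> by auto
  then obtain a3 where a3: "a3 \<notin> ?S"
    by blast
  let ?T = "\<lambda>(x1, x2, x3). x1 * 1 + x2 * a2 + x3 * a3"
  have "inj_on ?T (K \<times> K \<times> K)"
    using independent_one_of_not_in_span[OF neg_divide_closed a2 a3]
    by (intro inj_on_combination3 diff_closed) simp_all
  moreover have "?T ` (K \<times> K \<times> K) = UNIV"
  proof (rule card_eq_UNIV_imp_eq_UNIV)
    show "card (?T ` (K \<times> K \<times> K)) = CARD('a)"
      using card_image[OF \<open>inj_on ?T _\<close>] card_cube
      by (simp add: card_cartesian_product power3_eq_cube)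
  qed simp
  ultimately show ?thesis
    using that[of 1 a2 a3] by (simp add: bij_betw_def)
qed

section \<open>Points of Sigma and graph planes\<close>

lemma proj_eq_iff: "proj u = proj v \<longleftrightarrow> (\<exists>c. c \<noteq> 0 \<and> u = (\<lambda>i. c * v i))"
  for u v :: "'a::field vec6"
proof
  assume "proj u = proj v"
  moreover have "u \<in> proj u"
    unfolding proj_def by (intro CollectI exI[of _ 1]) simp
  ultimately show "\<exists>c. c \<noteq> 0 \<and> u = (\<lambda>i. c * v i)"
    by (auto simp: proj_def)
next
  assume "\<exists>c. c \<noteq> 0 \<and> u = (\<lambda>i. c * v i)"
  then obtain c where "c \<noteq> 0" and u: "u = (\<lambda>i. c * v i)"
    by blast
  have "(\<lambda>i. d * u i) \<in> proj v" if "d \<noteq> 0" for d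
    unfolding proj_def u using that \<open>c \<noteq> 0\<close>
    by (intro CollectI exI[of _ "d * c"]) (simp add: mult.assoc)
  moreover have "(\<lambda>i. d * v i) \<in> proj u" if "d \<noteq> 0" for d
    unfolding proj_def u using that \<open>c \<noteq> 0\<close>
    by (intro CollectI exI[of _ "d / c"]) simp
  ultimately show "proj u = proj v"
    by (auto simp: proj_def)
qed

lemma diag_act_proj: "diag_act d (proj v) = proj (\<lambda>i. d i * v i)"
  for d v :: "'a::field vec6"
  unfolding diag_act_def proj_def setcompr_eq_image image_image by (simp add: mult.left_commute)

lemma proj_sigvec_eqE:
  assumes "a \<noteq> 0" and "proj (sigvec q a' b') = proj (sigvec q a b)"
  obtains c :: "'a::field" where "c \<noteq> 0" "c ^ q = c" "a' = c * a" "b' = c * b"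
proof -
  obtain c where "c \<noteq> 0" and c: "sigvec q a' b' = (\<lambda>i. c * sigvec q a b i)"
    using assms(2) proj_eq_iff by blast
  have "a' = c * a" "b' = c * b" "a' ^ q = c * a ^ q"
    using c[THEN fun_cong, of 0] c[THEN fun_cong, of 1] c[THEN fun_cong, of 2]
    by (simp_all add: sigvec_def vec6_def)
  then have "c ^ q * a ^ q = c * a ^ q"
    by (simp add: power_mult_distrib)
  then have "c ^ q = c"
    using assms(1) by simp
  then show thesis
    using that \<open>c \<noteq> 0\<close> \<open>a' = c * a\<close> \<open>b' = c * b\<close> by blast
qed

lemma proj_sigvec_scale:
  fixes c :: "'a::field"
  assumes "c \<noteq> 0" and "c ^ q = c"
  shows "proj (sigvec q (c * a) (c * b)) = proj (sigvec q a b)"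
proof -
  have "c ^ (q ^ 2) = c"
    using assms(2) by (simp add: power2_eq_square power_mult)
  then have "sigvec q (c * a) (c * b) = (\<lambda>i. c * sigvec q a b i)"
    using assms(2) by (simp add: sigvec_def vec6_def power_mult_distrib fun_eq_iff)
  then show ?thesis
    using assms(1) proj_eq_iff by blast
qed

definition graph_plane :: "nat \<Rightarrow> ('a::field \<Rightarrow> 'a) \<Rightarrow> 'a point set" where
  "graph_plane q f = {proj (sigvec q a (f a)) | a. a \<noteq> 0}"

lemma graph_plane_eq_image: "graph_plane q f = (\<lambda>a. proj (sigvec q a (f a))) ` {a. a \<noteq> 0}"
  by (auto simp: graph_plane_def)

lemma proj_sigvec_mem_graph_plane_iff:
  assumes homogeneous: "\<And>c x. c \<in> subfield q \<Longrightarrow> f (c * x) = c * f x" and "a \<noteq> 0"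
  shows "proj (sigvec q a b) \<in> graph_plane q f \<longleftrightarrow> b = f a"
proof
  assume "proj (sigvec q a b) \<in> graph_plane q f"
  then obtain a' where "proj (sigvec q a' (f a')) = proj (sigvec q a b)"
    unfolding graph_plane_def by auto
  then obtain c where "c \<noteq> 0" "c ^ q = c" "a' = c * a" "f a' = c * b"
    using proj_sigvec_eqE[OF \<open>a \<noteq> 0\<close>] by metis
  then have "c * f a = c * b"
    using homogeneous by (simp add: subfield_def)
  then show "b = f a"
    using \<open>c \<noteq> 0\<close> by simp
next
  assume "b = f a"
  then show "proj (sigvec q a b) \<in> graph_plane q f"
    unfolding graph_plane_def using \<open>a \<noteq> 0\<close> by blast
qed

lemma graph_plane_eq_imp_eq:
  assumes homogeneous: "\<And>c x. c \<in> subfield q \<Longrightarrow> g (c * x) = c * g x"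
    and "graph_plane q f = graph_plane q g" and "a \<noteq> 0"
  shows "f a = g a"
proof -
  have "proj (sigvec q a (f a)) \<in> graph_plane q g"
    using assms(2,3) unfolding graph_plane_def by blast
  then show ?thesis
    using proj_sigvec_mem_graph_plane_iff[OF homogeneous \<open>a \<noteq> 0\<close>] by simp
qed

lemma card_graph_plane_Int_le_1:
  assumes hom_f: "\<And>c x. c \<in> subfield q \<Longrightarrow> f (c * x) = c * f x"
    and hom_g: "\<And>c x. c \<in> subfield q \<Longrightarrow> g (c * x) = c * g x"
    and proportional: "\<And>a b. a \<noteq> 0 \<Longrightarrow> b \<noteq> 0 \<Longrightarrow> f a = g a \<Longrightarrow> f b = g b \<Longrightarrow> b / a \<in> subfield q"
  shows "card (graph_plane q f \<inter> graph_plane q g) \<le> 1"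
proof -
  have common_point: "\<exists>a. a \<noteq> 0 \<and> f a = g a \<and> X = proj (sigvec q a (f a))"
    if mem: "X \<in> graph_plane q f \<inter> graph_plane q g" for X
  proof -
    obtain a where "a \<noteq> 0" and X: "X = proj (sigvec q a (f a))"
      using IntD1[OF mem] unfolding graph_plane_def by blast
    moreover have "f a = g a"
      using IntD2[OF mem] proj_sigvec_mem_graph_plane_iff[OF hom_g \<open>a \<noteq> 0\<close>] X by simp
    ultimately show ?thesis
      by blast
  qed
  have unique: "X = Y"
    if X_mem: "X \<in> graph_plane q f \<inter> graph_plane q g"
      and Y_mem: "Y \<in> graph_plane q f \<inter> graph_plane q g" for X Y
  proof -
    obtain a where "a \<noteq> 0" "f a = g a" and X: "X = proj (sigvec q a (f a))"
      using common_point[OF X_mem] by blast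
    obtain b where "b \<noteq> 0" "f b = g b" and Y: "Y = proj (sigvec q b (f b))"
      using common_point[OF Y_mem] by blast
    define c where "c = b / a"
    have "c \<in> subfield q" "c \<noteq> 0" "b = c * a"
      using proportional \<open>a \<noteq> 0\<close> \<open>b \<noteq> 0\<close> \<open>f a = g a\<close> \<open>f b = g b\<close> by (simp_all add: c_def)
    then have "Y = proj (sigvec q (c * a) (c * f a))"
      using Y hom_f by simp
    also have "\<dots> = X"
      using proj_sigvec_scale \<open>c \<in> subfield q\<close> \<open>c \<noteq> 0\<close> X by (simp add: subfield_def)
    finally show ?thesis ..
  qed
  show ?thesis
  proof (cases "finite (graph_plane q f \<inter> graph_plane q g)")
    case True
    then show ?thesis
      unfolding One_nat_def card_le_Suc0_iff_eq[OF True] using unique by blast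
  qed simp
qed

lemma graph_plane_eq_combinations:
  fixes f :: "'a::field \<Rightarrow> 'a" and a1 a2 a3 :: 'a
  assumes basis: "bij_betw (\<lambda>(x1, x2, x3). x1 * a1 + x2 * a2 + x3 * a3)
                  (subfield q \<times> subfield q \<times> subfield q) UNIV"
    and linear: "\<And>x1 x2 x3. x1 \<in> subfield q \<Longrightarrow> x2 \<in> subfield q \<Longrightarrow> x3 \<in> subfield q \<Longrightarrow>
      f (x1 * a1 + x2 * a2 + x3 * a3) = x1 * f a1 + x2 * f a2 + x3 * f a3"
    and "f 0 = 0"
  shows "graph_plane q f =
    {proj (sigvec q (x1 * a1 + x2 * a2 + x3 * a3) (x1 * f a1 + x2 * f a2 + x3 * f a3)) | x1 x2 x3.
       x1 \<in> subfield q \<and> x2 \<in> subfield q \<and> x3 \<in> subfield q \<and>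
       (x1 * a1 + x2 * a2 + x3 * a3, x1 * f a1 + x2 * f a2 + x3 * f a3) \<noteq> (0, 0)}"
    (is "_ = ?R")
proof
  let ?K = "subfield q :: 'a set"
  show "graph_plane q f \<subseteq> ?R"
  proof
    fix X
    assume "X \<in> graph_plane q f"
    then obtain a where "a \<noteq> 0" and X: "X = proj (sigvec q a (f a))"
      unfolding graph_plane_def by blast
    have "a \<in> (\<lambda>(x1, x2, x3). x1 * a1 + x2 * a2 + x3 * a3) ` (?K \<times> ?K \<times> ?K)"
      using bij_betw_imp_surj_on[OF basis] by simp
    then obtain x1 x2 x3 where "x1 \<in> ?K" "x2 \<in> ?K" "x3 \<in> ?K" "a = x1 * a1 + x2 * a2 + x3 * a3"
      by auto
    moreover have "X = proj (sigvec q (x1 * a1 + x2 * a2 + x3 * a3) (x1 * f a1 + x2 * f a2 + x3 * f a3))"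
      using X linear calculation by simp
    ultimately show "X \<in> ?R"
      using \<open>a \<noteq> 0\<close> by blast
  qed
  show "?R \<subseteq> graph_plane q f"
  proof
    fix X
    assume "X \<in> ?R"
    then obtain x1 x2 x3 where x: "x1 \<in> ?K" "x2 \<in> ?K" "x3 \<in> ?K"
      and nonzero: "(x1 * a1 + x2 * a2 + x3 * a3, x1 * f a1 + x2 * f a2 + x3 * f a3) \<noteq> (0, 0)"
      and X: "X = proj (sigvec q (x1 * a1 + x2 * a2 + x3 * a3) (x1 * f a1 + x2 * f a2 + x3 * f a3))"
      by blast
    define a where "a = x1 * a1 + x2 * a2 + x3 * a3"
    have "f a = x1 * f a1 + x2 * f a2 + x3 * f a3"
      unfolding a_def using linear x by blast
    moreover from this have "a \<noteq> 0"
      using nonzero \<open>f 0 = 0\<close> by (auto simp: a_def)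
    ultimately show "X \<in> graph_plane q f"
      unfolding graph_plane_def X a_def by (intro CollectI exI[of _ a]) (simp add: a_def)
  qed
qed

lemma sigma_plane_graph_plane:
  fixes f :: "'a::field \<Rightarrow> 'a" and a1 a2 a3 :: 'a
  assumes "q > 0"
    and basis: "bij_betw (\<lambda>(x1, x2, x3). x1 * a1 + x2 * a2 + x3 * a3)
                  (subfield q \<times> subfield q \<times> subfield q) UNIV"
    and additive: "\<And>x y. f (x + y) = f x + f y"
    and homogeneous: "\<And>c x. c \<in> subfield q \<Longrightarrow> f (c * x) = c * f x"
  shows "sigma_plane q (graph_plane q f)"
proof -
  let ?K = "subfield q :: 'a set"
  have "f 0 = 0"
    using additive[of 0 0] by (simp only: add_0_right add_cancel_right_right)
  have "0 \<in> ?K"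
    using \<open>q > 0\<close> by (simp add: subfield_def)
  have "\<forall>x1\<in>?K. \<forall>x2\<in>?K. \<forall>x3\<in>?K.
      x1 * a1 + x2 * a2 + x3 * a3 = 0 \<and> x1 * f a1 + x2 * f a2 + x3 * f a3 = 0
      \<longrightarrow> x1 = 0 \<and> x2 = 0 \<and> x3 = 0"
    using inj_onD[OF bij_betw_imp_inj_on[OF basis], of _ "(0, 0, 0)"] \<open>0 \<in> ?K\<close> by auto
  moreover have "graph_plane q f =
      {proj (sigvec q (x1 * a1 + x2 * a2 + x3 * a3) (x1 * f a1 + x2 * f a2 + x3 * f a3)) | x1 x2 x3.
         x1 \<in> ?K \<and> x2 \<in> ?K \<and> x3 \<in> ?K \<and>
         (x1 * a1 + x2 * a2 + x3 * a3, x1 * f a1 + x2 * f a2 + x3 * f a3) \<noteq> (0, 0)}"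
    by (rule graph_plane_eq_combinations[where f = f, OF basis _ \<open>f 0 = 0\<close>]) (simp add: additive homogeneous)
  ultimately show ?thesis
    unfolding sigma_plane_def
    by (intro exI[of _ a1] exI[of _ "f a1"] exI[of _ a2] exI[of _ "f a2"] exI[of _ a3] exI[of _ "f a3"]
        conjI)
qed

lemma diag_mult_sigvec:
  fixes \<eta> :: "'a::field"
  assumes "\<eta> ^ (q ^ 3) = \<eta>"
  shows "(\<lambda>i. diag_g q \<eta> i * diag_h q w i * sigvec q a b i)
    = sigvec q (\<eta> ^ 2 * a) (\<eta> ^ (q + 1) * w * b)"
proof -
  have "(q + 1) * q = q ^ 2 + q" and "(q + 1) * q ^ 2 = q ^ 3 + q ^ 2"
    by (simp_all add: algebra_simps power2_eq_square power3_eq_cube)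
  then have "(\<eta> ^ (q + 1)) ^ q = \<eta> ^ (q ^ 2 + q)"
    and "(\<eta> ^ (q + 1)) ^ (q ^ 2) = \<eta> ^ (q ^ 3) * \<eta> ^ (q ^ 2)"
    by (simp_all only: power_mult[symmetric] flip: power_add)
  moreover have "\<eta> ^ (q ^ 3) * \<eta> ^ (q ^ 2) = \<eta> ^ (q ^ 2 + 1)"
    using assms by (simp add: power_add mult.commute)
  ultimately show ?thesis
    by (auto simp: fun_eq_iff diag_g_def diag_h_def sigvec_def vec6_def power_mult_distrib
        mult_ac simp flip: power_mult)
qed

lemma diag_act_graph_plane:
  fixes \<eta> :: "'a::field"
  assumes "\<eta> \<noteq> 0" and "\<eta> ^ (q ^ 3) = \<eta>"
  shows "diag_act (\<lambda>i. diag_g q \<eta> i * diag_h q w i) ` graph_plane q f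
    = graph_plane q (\<lambda>x. \<eta> ^ (q + 1) * w * f (x / \<eta> ^ 2))"
    (is "_ = graph_plane q ?g")
proof -
  let ?point = "\<lambda>a. proj (sigvec q a (?g a))"
  have "diag_act (\<lambda>i. diag_g q \<eta> i * diag_h q w i) ` graph_plane q f
      = (\<lambda>a. ?point (\<eta> ^ 2 * a)) ` {a. a \<noteq> 0}"
    unfolding graph_plane_eq_image image_image using assms
    by (simp add: diag_act_proj diag_mult_sigvec)
  also have "\<dots> = ?point ` ((\<lambda>a. \<eta> ^ 2 * a) ` {a. a \<noteq> 0})"
    by (rule image_image[symmetric])
  also have "(\<lambda>a. \<eta> ^ 2 * a) ` {a. a \<noteq> 0} = {a. a \<noteq> 0}"
    using assms(1) by (auto intro!: image_eqI[where x = "_ / \<eta> ^ 2"])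
  finally show ?thesis
    unfolding graph_plane_eq_image .
qed

section \<open>Graphs of the maps a |-> w (l a + a^q / l) / 2\<close>

lemma ratio_mem_subfield_of_common_root:
  fixes \<alpha> \<beta> a b :: "'a::field"
  assumes "(\<alpha>, \<beta>) \<noteq> (0, 0)" and "a \<noteq> 0"
    and root_a: "\<alpha> * a + \<beta> * a ^ q = 0" and root_b: "\<alpha> * b + \<beta> * b ^ q = 0"
  shows "b / a \<in> subfield q"
proof (cases "\<beta> = 0")
  case True
  then show ?thesis
    using assms by simp
next
  case False
  have "\<beta> * (a ^ q * b - b ^ q * a) = (\<alpha> * a + \<beta> * a ^ q) * b - (\<alpha> * b + \<beta> * b ^ q) * a"
    by (simp add: algebra_simps)
  then have "a ^ q * b = b ^ q * a"
    using False root_a root_b by simp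
  then show ?thesis
    using \<open>a \<noteq> 0\<close> by (simp add: subfield_def power_divide field_simps)
qed

lemma odd_root_of_unity_eq_if_square_eq:
  fixes l m :: "'a::field"
  assumes "(2::'a) \<noteq> 0" and "odd n" and "l ^ n = 1" and "m ^ n = 1" and "l ^ 2 = m ^ 2"
  shows "l = m"
proof (rule ccontr)
  assume "l \<noteq> m"
  have "(l - m) * (l + m) = 0"
    using \<open>l ^ 2 = m ^ 2\<close> by (simp add: algebra_simps power2_eq_square)
  then have "l = - m"
    using \<open>l \<noteq> m\<close> by (simp add: add_eq_0_iff2)
  then have "(1::'a) = - 1"
    using assms(2-4) by (simp add: power_minus_odd)
  then show False
    using assms(1) by (simp add: eq_neg_iff_add_eq_0)
qed

definition plane_fun :: "nat \<Rightarrow> 'a::field \<Rightarrow> 'a \<Rightarrow> 'a \<Rightarrow> 'a" where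
  "plane_fun q l w a = w * (l * a + a ^ q / l) / 2"

lemma plane_fun_homogeneous:
  "c \<in> subfield q \<Longrightarrow> plane_fun q l w (c * a) = c * plane_fun q l w a"
  by (simp add: subfield_def plane_fun_def power_mult_distrib algebra_simps)

lemma plane_fun_diff:
  "plane_fun q l w x - plane_fun q m v x = (w * l - v * m) / 2 * x + (w / l - v / m) / 2 * x ^ q"
  by (simp add: plane_fun_def algebra_simps diff_divide_distrib add_divide_distrib)

lemma plane_fun_conjugate:
  fixes \<eta> :: "'a::field"
  assumes "\<eta> \<noteq> 0" and "q > 0"
  shows "\<eta> ^ (q + 1) * w * plane_fun q 1 1 (x / \<eta> ^ 2) = plane_fun q (\<eta> ^ (q - 1)) w x"
proof -
  obtain n where q: "q = Suc n"
    using \<open>q > 0\<close> gr0_implies_Suc by blast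
  have "\<eta> ^ (q + 1) = \<eta> ^ n * \<eta> ^ 2" and "(\<eta> ^ 2) ^ q = \<eta> ^ n * \<eta> ^ n * \<eta> ^ 2"
    unfolding q by (simp_all add: power2_eq_square power_mult_distrib mult_ac)
  moreover have "q - 1 = n"
    using q by simp
  ultimately have key: "\<eta> ^ (q + 1) * (x / \<eta> ^ 2 + (x / \<eta> ^ 2) ^ q)
      = \<eta> ^ (q - 1) * x + x ^ q / \<eta> ^ (q - 1)"
    using assms(1) by (simp add: power_divide field_simps)
  have "\<eta> ^ (q + 1) * w * plane_fun q 1 1 (x / \<eta> ^ 2)
      = w * (\<eta> ^ (q + 1) * (x / \<eta> ^ 2 + (x / \<eta> ^ 2) ^ q)) / 2"
    unfolding plane_fun_def by (simp only: mult_1_left div_by_1 times_divide_eq_right mult_ac)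
  also have "\<dots> = plane_fun q (\<eta> ^ (q - 1)) w x"
    unfolding key plane_fun_def ..
  finally show ?thesis .
qed

lemma card_graph_plane_fun_Int_le_1:
  assumes "graph_plane q (plane_fun q l w) \<noteq> graph_plane q (plane_fun q m v)"
  shows "card (graph_plane q (plane_fun q l w) \<inter> graph_plane q (plane_fun q m v)) \<le> 1"
proof (rule card_graph_plane_Int_le_1)
  define \<alpha> where "\<alpha> = (w * l - v * m) / 2"
  define \<beta> where "\<beta> = (w / l - v / m) / 2"
  have diff: "plane_fun q l w x - plane_fun q m v x = \<alpha> * x + \<beta> * x ^ q" for x
    unfolding \<alpha>_def \<beta>_def by (rule plane_fun_diff)
  have "(\<alpha>, \<beta>) \<noteq> (0, 0)"
  proof
    assume "(\<alpha>, \<beta>) = (0, 0)"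
    then have "plane_fun q l w = plane_fun q m v"
      using diff by (simp add: fun_eq_iff)
    then show False
      using assms by simp
  qed
  then show "b / a \<in> subfield q"
    if "a \<noteq> 0" "b \<noteq> 0" "plane_fun q l w a = plane_fun q m v a" "plane_fun q l w b = plane_fun q m v b"
    for a b
    using that diff[of a] diff[of b] by (intro ratio_mem_subfield_of_common_root) simp_all
qed (simp_all add: plane_fun_homogeneous)

section \<open>The orbit of pi\<close>

locale gf_q3 =
  fixes q :: nat and field_type :: "'a::{field,finite} itself"
  assumes card_UNIV: "CARD('a) = q ^ 3"
    and q_power_of_CHAR: "\<exists>k. q = CHAR('a) ^ k"
    and odd_q: "odd q"
begin

lemma q_gt_1: "q > 1"
proof (rule ccontr)
  assume "\<not> q > 1"
  then have "q ^ 3 \<le> 1 ^ 3"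
    by (intro power_mono) simp_all
  then show False
    using card_UNIV two_le_card_field[where 'a = 'a] by simp
qed

lemma frobenius_add: "(x + y :: 'a) ^ (q ^ j) = x ^ (q ^ j) + y ^ (q ^ j)"
proof -
  obtain k where "q = CHAR('a) ^ k"
    using q_power_of_CHAR by blast
  then have "q ^ j = CHAR('a) ^ (k * j)"
    by (simp add: power_mult)
  then show ?thesis
    using freshmans_dream' prime_CHAR_finite_field by blast
qed

lemma two_power_frobenius: "(2::'a) ^ (q ^ j) = 2"
  using frobenius_add[of 1 1 j] by simp

lemma power_q_cubed: "(x::'a) ^ (q ^ 3) = x"
proof (cases "x = 0")
  case False
  have "x ^ (q ^ 3) = x * x ^ (CARD('a) - 1)"
    using card_UNIV q_gt_1 by (simp flip: power_Suc)
  then show ?thesis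
    using power_card_minus_one_eq_one[OF False] by simp
qed (use q_gt_1 in simp)

lemma two_neq_zero: "(2::'a) \<noteq> 0"
proof
  assume "(2::'a) = 0"
  then have "CHAR('a) dvd 2"
    by (metis of_nat_eq_0_iff_char_dvd of_nat_numeral)
  then have "CHAR('a) = 2"
    using prime_ge_2_nat[OF prime_CHAR_finite_field[where 'a = 'a]] dvd_imp_le[of "CHAR('a)" 2]
    by simp
  then obtain k where "q = 2 ^ k"
    using q_power_of_CHAR by auto
  then show False
    using q_gt_1 odd_q by (cases k) simp_all
qed

lemma subfield_diff: "x \<in> subfield q \<Longrightarrow> y \<in> subfield q \<Longrightarrow> (x - y :: 'a) \<in> subfield q"
  using frobenius_add[of x "- y" 1] odd_q by (simp add: subfield_def power_minus_odd)

lemma card_UNIV_minus_1: "CARD('a) - 1 = (q - 1) * (q ^ 2 + q + 1)"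
proof -
  obtain n where "q = Suc n"
    using q_gt_1 by (cases q) simp_all
  then show ?thesis
    using card_UNIV by (simp add: power2_eq_square power3_eq_cube algebra_simps)
qed

lemma card_subfield: "card (subfield q :: 'a set) = q"
proof -
  have "x ^ q = x \<longleftrightarrow> x = 0 \<or> x ^ (q - 1) = 1" for x :: 'a
    using q_gt_1 power_eq_if[of x q] by (cases "x = 0") auto
  then have "subfield q = insert 0 {x::'a. x ^ (q - 1) = 1}"
    by (auto simp: subfield_def)
  moreover have "(0::'a) \<notin> {x. x ^ (q - 1) = 1}"
    using q_gt_1 by (simp add: power_0_left)
  ultimately show ?thesis
    using card_power_eq_one[OF card_UNIV_minus_1] q_gt_1 by simp
qed

definition Lambda :: "'a set" where
  "Lambda = (\<lambda>\<eta>. \<eta> ^ (q - 1)) ` {\<eta>. \<eta> \<noteq> 0}"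

lemma card_Lambda: "card Lambda = q ^ 2 + q + 1"
  unfolding Lambda_def by (rule card_image_power_nonzero[OF card_UNIV_minus_1])

lemma Lambda_root_of_unity:
  assumes "l \<in> Lambda"
  shows "l ^ (q ^ 2 + q + 1) = 1"
proof -
  obtain \<eta> :: 'a where "\<eta> \<noteq> 0" and "l = \<eta> ^ (q - 1)"
    using assms unfolding Lambda_def by blast
  then have "l ^ (q ^ 2 + q + 1) = \<eta> ^ (CARD('a) - 1)"
    by (simp only: power_mult[symmetric] card_UNIV_minus_1)
  then show ?thesis
    using power_card_minus_one_eq_one[OF \<open>\<eta> \<noteq> 0\<close>] by simp
qed

lemma plane_fun_add: "plane_fun q l w (x + y :: 'a) = plane_fun q l w x + plane_fun q l w y"
  using frobenius_add[of x y 1] by (simp add: plane_fun_def algebra_simps add_divide_distrib)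

lemma sigma_plane_plane_fun: "sigma_plane q (graph_plane q (plane_fun q l (w::'a)))"
proof -
  obtain a1 a2 a3 :: 'a where
    "bij_betw (\<lambda>(x1, x2, x3). x1 * a1 + x2 * a2 + x3 * a3) (subfield q \<times> subfield q \<times> subfield q) UNIV"
    using basis_of_card_cube[of "subfield q"] subfield_diff subfield_divide card_subfield card_UNIV
    by metis
  then show ?thesis
    using q_gt_1 plane_fun_add plane_fun_homogeneous by (intro sigma_plane_graph_plane) auto
qed

lemma plane_pi_eq_graph_plane: "plane_pi q = graph_plane q (plane_fun q (1::'a) 1)"
proof -
  have "q * q = q ^ 2" and "q * q ^ 2 = q ^ 3"
    by (simp_all add: power2_eq_square power3_eq_cube)
  then have "(a ^ q) ^ q = a ^ (q ^ 2)" and "(a ^ q) ^ (q ^ 2) = a" for a :: 'a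
    using power_q_cubed[of a] by (simp_all only: power_mult[symmetric])
  then have "((a + a ^ q) / 2) ^ q = (a ^ q + a ^ (q ^ 2)) / 2"
    and "((a + a ^ q) / 2) ^ (q ^ 2) = (a ^ (q ^ 2) + a) / 2" for a :: 'a
    using frobenius_add[of a "a ^ q" 1] frobenius_add[of a "a ^ q" 2]
      two_power_frobenius[of 1] two_power_frobenius[of 2]
    by (simp_all add: power_divide)
  then have "sigvec q a (plane_fun q 1 1 a)
      = vec6 a ((a + a ^ q) / 2) (a ^ q) ((a ^ q + a ^ (q ^ 2)) / 2) (a ^ (q ^ 2)) ((a ^ (q ^ 2) + a) / 2)"
    for a :: 'a
    unfolding sigvec_def plane_fun_def by (simp only: mult_1_left div_by_1)
  then show ?thesis
    unfolding plane_pi_def graph_plane_def by simp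
qed

lemma orbit_plane_pi:
  assumes "(\<eta>::'a) \<noteq> 0"
  shows "diag_act (\<lambda>i. diag_g q \<eta> i * diag_h q w i) ` plane_pi q
    = graph_plane q (plane_fun q (\<eta> ^ (q - 1)) w)"
  unfolding plane_pi_eq_graph_plane diag_act_graph_plane[OF assms power_q_cubed]
  using plane_fun_conjugate[OF assms] q_gt_1 by simp

lemma codeC_eq: "codeC q = (\<lambda>(l, w). graph_plane q (plane_fun q l w)) ` (Lambda \<times> {w::'a. w \<noteq> 0})"
proof
  show "codeC q \<subseteq> (\<lambda>(l, w). graph_plane q (plane_fun q l w)) ` (Lambda \<times> {w. w \<noteq> 0})"
  proof
    fix P :: "'a point set"
    assume "P \<in> codeC q"
    then obtain \<eta> w :: 'a where "\<eta> \<noteq> 0" "w \<noteq> 0"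
      and "P = diag_act (\<lambda>i. diag_g q \<eta> i * diag_h q w i) ` plane_pi q"
      unfolding codeC_def groupG_def by blast
    then have "P = graph_plane q (plane_fun q (\<eta> ^ (q - 1)) w)"
      by (simp add: orbit_plane_pi)
    moreover have "(\<eta> ^ (q - 1), w) \<in> Lambda \<times> {w. w \<noteq> 0}"
      unfolding Lambda_def using \<open>\<eta> \<noteq> 0\<close> \<open>w \<noteq> 0\<close> by blast
    ultimately show "P \<in> (\<lambda>(l, w). graph_plane q (plane_fun q l w)) ` (Lambda \<times> {w. w \<noteq> 0})"
      by force
  qed
  show "(\<lambda>(l, w). graph_plane q (plane_fun q l w)) ` (Lambda \<times> {w. w \<noteq> 0}) \<subseteq> codeC q"
  proof clarify
    fix l w :: 'a
    assume "l \<in> Lambda" "w \<noteq> 0"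
    then obtain \<eta> where "\<eta> \<noteq> 0" "l = \<eta> ^ (q - 1)"
      unfolding Lambda_def by blast
    then show "graph_plane q (plane_fun q l w) \<in> codeC q"
      unfolding codeC_def groupG_def using orbit_plane_pi[of \<eta> w, symmetric] \<open>w \<noteq> 0\<close> by blast
  qed
qed

lemma subfield_neq_UNIV: "subfield q \<noteq> (UNIV :: 'a set)"
proof
  assume "subfield q = (UNIV :: 'a set)"
  then have "q ^ 3 = card (subfield q :: 'a set)"
    using card_UNIV by simp
  then have "q ^ 3 = q"
    using card_subfield by simp
  then show False
    using power_strict_increasing[of 1 3 q] q_gt_1 by simp
qed

lemma plane_fun_coeffs_eq_if_graph_plane_eq:
  assumes "graph_plane q (plane_fun q l w) = graph_plane q (plane_fun q m (v::'a))"
  shows "w * l = v * m" and "w / l = v / m"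
proof -
  define \<alpha> where "\<alpha> = (w * l - v * m) / 2"
  define \<beta> where "\<beta> = (w / l - v / m) / 2"
  have roots: "\<alpha> * x + \<beta> * x ^ q = 0" if "x \<noteq> 0" for x :: 'a
    using graph_plane_eq_imp_eq[OF plane_fun_homogeneous assms that] plane_fun_diff[of q l w x m v]
    unfolding \<alpha>_def \<beta>_def by simp
  have "(\<alpha>, \<beta>) = (0, 0)"
  proof (rule ccontr)
    assume "(\<alpha>, \<beta>) \<noteq> (0, 0)"
    then have "x \<in> subfield q" if "x \<noteq> 0" for x :: 'a
      using ratio_mem_subfield_of_common_root[of \<alpha> \<beta> 1 q x] roots[of 1] roots[OF that] by simp
    moreover have "(0::'a) \<in> subfield q"
      using q_gt_1 by (simp add: subfield_def power_0_left)
    ultimately have "subfield q = (UNIV :: 'a set)"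
      by (metis UNIV_eq_I)
    with subfield_neq_UNIV show False ..
  qed
  then show "w * l = v * m" and "w / l = v / m"
    using two_neq_zero by (simp_all add: \<alpha>_def \<beta>_def)
qed

lemma inj_on_plane_fun_graph_plane:
  "inj_on (\<lambda>(l, w). graph_plane q (plane_fun q l w)) (Lambda \<times> {w::'a. w \<noteq> 0})"
proof (rule inj_onI, clarsimp)
  fix l w m v :: 'a
  assume "l \<in> Lambda" "w \<noteq> 0" "m \<in> Lambda" "v \<noteq> 0"
    and eq: "graph_plane q (plane_fun q l w) = graph_plane q (plane_fun q m v)"
  have "l \<noteq> 0" "m \<noteq> 0"
    using \<open>l \<in> Lambda\<close> \<open>m \<in> Lambda\<close> q_gt_1 by (auto simp: Lambda_def)
  then have "w * m = v * l"
    using plane_fun_coeffs_eq_if_graph_plane_eq(2)[OF eq] by (simp add: field_simps)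
  have "v * l ^ 2 = w * m * l"
    using \<open>w * m = v * l\<close> by (simp add: power2_eq_square)
  also have "\<dots> = w * l * m"
    by (simp add: mult_ac)
  also have "\<dots> = v * m ^ 2"
    using plane_fun_coeffs_eq_if_graph_plane_eq(1)[OF eq] by (simp add: power2_eq_square)
  finally have "l ^ 2 = m ^ 2"
    using \<open>v \<noteq> 0\<close> by simp
  moreover have "odd (q ^ 2 + q + 1)"
    using odd_q by simp
  ultimately have "l = m"
    using odd_root_of_unity_eq_if_square_eq[OF two_neq_zero _ Lambda_root_of_unity[OF \<open>l \<in> Lambda\<close>]
        Lambda_root_of_unity[OF \<open>m \<in> Lambda\<close>]]
    by blast
  then show "l = m \<and> w = v"
    using plane_fun_coeffs_eq_if_graph_plane_eq(1)[OF eq] \<open>m \<noteq> 0\<close> by simp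
qed

lemma card_codeC: "card (codeC q :: 'a point set set) = (q ^ 3 - 1) * (q ^ 2 + q + 1)"
proof -
  have "card (codeC q :: 'a point set set) = card Lambda * card {w::'a. w \<noteq> 0}"
    unfolding codeC_eq using inj_on_plane_fun_graph_plane by (simp add: card_image card_cartesian_product)
  then show ?thesis
    using card_Lambda card_nonzero[where 'a = 'a] card_UNIV by simp
qed

lemma sigma_plane_codeC: "P \<in> codeC q \<Longrightarrow> sigma_plane q (P :: 'a point set)"
  unfolding codeC_eq using sigma_plane_plane_fun by auto

lemma card_codeC_Int_le_1:
  assumes "P1 \<in> codeC q" "P2 \<in> codeC q" and "P1 \<noteq> P2"
  shows "card (P1 \<inter> (P2 :: 'a point set)) \<le> 1"
proof -
  obtain l w l' w' where "P1 = graph_plane q (plane_fun q l w)" "P2 = graph_plane q (plane_fun q l' w')"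
    using assms(1,2) unfolding codeC_eq by auto
  then show ?thesis
    using \<open>P1 \<noteq> P2\<close> card_graph_plane_fun_Int_le_1 by simp
qed

end

theorem theorem4p2:
  fixes q :: nat
  assumes "card (UNIV :: 'a set) = q ^ 3"
    and "odd q"
    and "\<exists>p k. prime p \<and> k > 0 \<and> q = p ^ k"
  shows "(\<forall>P \<in> (codeC q :: ('a::{field,finite}) point set set). sigma_plane q P)
       \<and> card (codeC q :: 'a point set set) = (q^3 - 1) * (q^2 + q + 1)
       \<and> (\<forall>P1 \<in> (codeC q :: 'a point set set). \<forall>P2 \<in> codeC q.
            P1 \<noteq> P2 \<longrightarrow> card (P1 \<inter> P2) \<le> 1)"
proof -
  obtain p k where "prime p" and "q = p ^ k"
    using assms(3) by blast
  then have "CHAR('a) = p"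
    using CHAR_eq_if_card_prime_power[of p "k * 3"] assms(1) by (simp add: power_mult)
  then interpret gf_q3 q "TYPE('a)"
    using assms(1,2) \<open>q = p ^ k\<close> by unfold_locales auto
  show ?thesis
    using sigma_plane_codeC card_codeC card_codeC_Int_le_1 by blast
qed

end
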